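(* Let $G$ be a graph and let $K$ be a cut-set of the complement $\overline{G}$. Then \[\chi(G) \leq \frac{1}{2} \left(\omega(G) + \Delta(G) + 1 \right) + \frac{4\chi(G[K]) + \alpha(G[K]) + 3 - \alpha(G)}{4}.\]
   Context: All graphs are finite and simple with non-empty vertex set. $\chi$ is the chromatic number, $\omega$ the clique number, $\Delta$ the maximum degree, $\alpha$ the independence number. $\overline{G}$ is the complement of $G$. A cut-set of $\overline{G}$ is a set $K$ of vertices such that $\overline{G}-K$ is disconnected; $G[K]$ is the subgraph of $G$ induced by $K$. By convention the graph on the empty vertex set has chromatic number $0$ and independence number $0$. *)

theory Defs
  imports Complex_Main
begin

text \<open>All graph parameters are taken
for the subgraph of (V,E) induced by a vertex set S.\<close>

definition simple_graph :: "'a set \<Rightarrow> ('a \<Rightarrow> 'a \<Rightarrow> bool) \<Rightarrow> bool" where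
  "simple_graph V E \<longleftrightarrow> finite V \<and> V \<noteq> {} \<and>
     (\<forall>x y. E x y \<longrightarrow> x \<in> V \<and> y \<in> V) \<and>
     (\<forall>x y. E x y \<longrightarrow> E y x) \<and> (\<forall>x. \<not> E x x)"

definition proper_colouring :: "('a \<Rightarrow> 'a \<Rightarrow> bool) \<Rightarrow> 'a set \<Rightarrow> nat \<Rightarrow> ('a \<Rightarrow> nat) \<Rightarrow> bool" where
  "proper_colouring E S k f \<longleftrightarrow> (\<forall>x\<in>S. f x < k) \<and> (\<forall>x\<in>S. \<forall>y\<in>S. E x y \<longrightarrow> f x \<noteq> f y)"

definition chi :: "('a \<Rightarrow> 'a \<Rightarrow> bool) \<Rightarrow> 'a set \<Rightarrow> nat" where
  "chi E S = (LEAST k. \<exists>f. proper_colouring E S k f)"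

definition is_clique :: "('a \<Rightarrow> 'a \<Rightarrow> bool) \<Rightarrow> 'a set \<Rightarrow> bool" where
  "is_clique E C \<longleftrightarrow> (\<forall>x\<in>C. \<forall>y\<in>C. x \<noteq> y \<longrightarrow> E x y)"

definition is_indep :: "('a \<Rightarrow> 'a \<Rightarrow> bool) \<Rightarrow> 'a set \<Rightarrow> bool" where
  "is_indep E I \<longleftrightarrow> (\<forall>x\<in>I. \<forall>y\<in>I. \<not> E x y)"

definition omega :: "('a \<Rightarrow> 'a \<Rightarrow> bool) \<Rightarrow> 'a set \<Rightarrow> nat" where
  "omega E S = Max {card C | C. C \<subseteq> S \<and> is_clique E C}"

definition alpha :: "('a \<Rightarrow> 'a \<Rightarrow> bool) \<Rightarrow> 'a set \<Rightarrow> nat" where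
  "alpha E S = Max {card I | I. I \<subseteq> S \<and> is_indep E I}"

definition degree :: "('a \<Rightarrow> 'a \<Rightarrow> bool) \<Rightarrow> 'a set \<Rightarrow> 'a \<Rightarrow> nat" where
  "degree E S v = card {u \<in> S. E v u}"

definition max_degree :: "('a \<Rightarrow> 'a \<Rightarrow> bool) \<Rightarrow> 'a set \<Rightarrow> nat" where
  "max_degree E S = Max (insert 0 (degree E S ` S))"

definition compl_adj :: "('a \<Rightarrow> 'a \<Rightarrow> bool) \<Rightarrow> 'a \<Rightarrow> 'a \<Rightarrow> bool" where
  "compl_adj E x y \<longleftrightarrow> x \<noteq> y \<and> \<not> E x y"

definition connected_in :: "('a \<Rightarrow> 'a \<Rightarrow> bool) \<Rightarrow> 'a set \<Rightarrow> 'a \<Rightarrow> 'a \<Rightarrow> bool" where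
  "connected_in A S x y \<longleftrightarrow>
     (\<exists>p. p \<noteq> [] \<and> hd p = x \<and> last p = y \<and> set p \<subseteq> S \<and>
          (\<forall>i < length p - 1. A (p ! i) (p ! Suc i)))"

definition disconnected_in :: "('a \<Rightarrow> 'a \<Rightarrow> bool) \<Rightarrow> 'a set \<Rightarrow> bool" where
  "disconnected_in A S \<longleftrightarrow> (\<exists>x\<in>S. \<exists>y\<in>S. \<not> connected_in A S x y)"

definition compl_cutset :: "'a set \<Rightarrow> ('a \<Rightarrow> 'a \<Rightarrow> bool) \<Rightarrow> 'a set \<Rightarrow> bool" where
  "compl_cutset V E K \<longleftrightarrow> K \<subseteq> V \<and> disconnected_in (compl_adj E) (V - K)"

end

(*
  Outside K the complement is disconnected, so V - K splits into nonempty parts A and B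
  with every vertex of A adjacent in G to every vertex of B.  For such a join
  chi V <= chi K + chi A + chi B, alpha V <= alpha K + max (alpha A) (alpha B),
  omega A + omega B <= omega V, and Delta V is at least Delta A + |B| and Delta B + |A|.
  The corollary therefore follows from the bound 4 chi + max alpha 3 <= 2 omega + Delta + n + 4,
  valid for every graph on n vertices.

  That bound is proved by induction: deleting a maximum independent set costs one colour and
  lowers Delta by at least one, since every remaining vertex has a neighbour in the set.  In the
  base case alpha <= 2 one takes a maximum matching M of the complement; colour classes of size
  two along M give chi <= |M| + |U|, where the unmatched vertices U form a clique.  For u in U
  the non-neighbours N of u form a clique and n <= 1 + Delta + |N|.  Let J be the set of vertices
  of N adjacent to all of U - {u}.  The absence of augmenting paths of length 3 and 5 makes U
  together with the mates of N - J and of one vertex of J a clique; (U - {u}) together with J is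
  another one.  Their sizes add up to 2|U| + |N|, whence 4 chi <= 2 omega + Delta + n + 1.
*)

theory Submission
  imports Defs
begin

lemma chi_le_colouring: "proper_colouring E S k f \<Longrightarrow> chi E S \<le> k"
  unfolding chi_def by (rule Least_le) blast

lemma chi_empty [simp]: "chi E {} = 0"
  using chi_le_colouring[of E "{}" 0 "\<lambda>_. 0"] by (simp add: proper_colouring_def)

lemma chi_le_card_indep_cover:
  assumes "finite P" and "\<forall>B\<in>P. is_indep E B" and "S \<subseteq> \<Union>P"
  shows "chi E S \<le> card P"
proof -
  obtain g where g: "bij_betw g P {0..<card P}"
    using ex_bij_betw_finite_nat[OF assms(1)] by blast
  define block where "block x = (SOME B. B \<in> P \<and> x \<in> B)" for x
  have block: "block x \<in> P" "x \<in> block x" if "x \<in> S" for x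
    using someI_ex[of "\<lambda>B. B \<in> P \<and> x \<in> B"] that assms(3) unfolding block_def by blast+
  have "proper_colouring E S (card P) (g \<circ> block)"
    unfolding proper_colouring_def
  proof (intro conjI ballI impI)
    show "(g \<circ> block) x < card P" if "x \<in> S" for x
      using bij_betw_apply[OF g block(1)[OF that]] by simp
    show "(g \<circ> block) x \<noteq> (g \<circ> block) y" if "x \<in> S" "y \<in> S" "E x y" for x y
    proof
      assume "(g \<circ> block) x = (g \<circ> block) y"
      then have "block x = block y"
        using inj_onD[OF bij_betw_imp_inj_on[OF g]] block that by simp
      then show False
        using block[OF that(1)] block[OF that(2)] that(3) assms(2) unfolding is_indep_def by metis
    qed
  qed
  then show ?thesis by (rule chi_le_colouring)
qed

lemma chi_indep_le_1: "is_indep E S \<Longrightarrow> chi E S \<le> 1"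
  using chi_le_card_indep_cover[of "{S}" E S] by simp

lemma finite_card_subsets: "finite S \<Longrightarrow> finite {card C | C. C \<subseteq> S \<and> P C}"
  by (rule finite_subset[of _ "card ` Pow S"]) auto

lemma card_clique_le_omega:
  "finite S \<Longrightarrow> C \<subseteq> S \<Longrightarrow> is_clique E C \<Longrightarrow> card C \<le> omega E S"
  unfolding omega_def by (rule Max_ge) (auto simp: finite_card_subsets)

lemma ex_clique_card_omega:
  assumes "finite S"
  obtains C where "C \<subseteq> S" "is_clique E C" "card C = omega E S"
proof -
  have "{} \<subseteq> S \<and> is_clique E {}"
    by (simp add: is_clique_def)
  then have "{card C | C. C \<subseteq> S \<and> is_clique E C} \<noteq> {}"
    by blast
  then have "omega E S \<in> {card C | C. C \<subseteq> S \<and> is_clique E C}"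
    unfolding omega_def using assms by (intro Max_in finite_card_subsets)
  then show ?thesis using that by auto
qed

lemma omega_mono:
  assumes "finite S" "T \<subseteq> S"
  shows "omega E T \<le> omega E S"
proof -
  obtain C where "C \<subseteq> T" "is_clique E C" "card C = omega E T"
    using ex_clique_card_omega[of T E] assms finite_subset by blast
  then show ?thesis
    using card_clique_le_omega[of S C E] assms by auto
qed

lemma card_indep_le_alpha:
  "finite S \<Longrightarrow> I \<subseteq> S \<Longrightarrow> is_indep E I \<Longrightarrow> card I \<le> alpha E S"
  unfolding alpha_def by (rule Max_ge) (auto simp: finite_card_subsets)

lemma ex_indep_card_alpha:
  assumes "finite S"
  obtains I where "I \<subseteq> S" "is_indep E I" "card I = alpha E S"
proof -
  have "{} \<subseteq> S \<and> is_indep E {}"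
    by (simp add: is_indep_def)
  then have "{card I | I. I \<subseteq> S \<and> is_indep E I} \<noteq> {}"
    by blast
  then have "alpha E S \<in> {card I | I. I \<subseteq> S \<and> is_indep E I}"
    unfolding alpha_def using assms by (intro Max_in finite_card_subsets)
  then show ?thesis using that by auto
qed

lemma alpha_Un_le:
  assumes "finite S" "finite T"
  shows "alpha E (S \<union> T) \<le> alpha E S + alpha E T"
proof -
  obtain I where I: "I \<subseteq> S \<union> T" "is_indep E I" "card I = alpha E (S \<union> T)"
    using ex_indep_card_alpha[of "S \<union> T" E] assms by blast
  have "I = (I \<inter> S) \<union> (I \<inter> T)"
    using I(1) by blast
  then have "card I \<le> card (I \<inter> S) + card (I \<inter> T)"
    by (metis card_Un_le)
  moreover have "card (I \<inter> S) \<le> alpha E S" "card (I \<inter> T) \<le> alpha E T"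
    using I(2) assms by (simp_all add: card_indep_le_alpha is_indep_def)
  ultimately show ?thesis using I(3) by linarith
qed

lemma degree_le_max_degree: "finite S \<Longrightarrow> v \<in> S \<Longrightarrow> degree E S v \<le> max_degree E S"
  unfolding max_degree_def by (rule Max_ge) auto

lemma ex_degree_eq_max_degree:
  assumes "finite S" "S \<noteq> {}"
  obtains v where "v \<in> S" "degree E S v = max_degree E S"
proof -
  have "max_degree E S = Max (degree E S ` S)"
    using assms by (simp add: max_degree_def Max_insert)
  then have "max_degree E S \<in> degree E S ` S"
    using assms by simp
  then show ?thesis using that by (metis imageE)
qed

lemma card_le_degree_compl_degree:
  assumes "finite S" "v \<in> S"
  shows "card S \<le> 1 + degree E S v + card {w \<in> S. compl_adj E v w}"
proof -
  have "S \<subseteq> insert v ({w \<in> S. E v w} \<union> {w \<in> S. compl_adj E v w})"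
    unfolding compl_adj_def by blast
  then have "card S \<le> card (insert v ({w \<in> S. E v w} \<union> {w \<in> S. compl_adj E v w}))"
    using assms(1) by (intro card_mono) auto
  also have "\<dots> \<le> 1 + card ({w \<in> S. E v w} \<union> {w \<in> S. compl_adj E v w})"
    using card_insert_le_m1 assms(1) by (simp add: card_insert_if)
  also have "\<dots> \<le> 1 + degree E S v + card {w \<in> S. compl_adj E v w}"
    unfolding degree_def using card_Un_le by simp
  finally show ?thesis .
qed

lemma max_degree_join_le:
  assumes "finite S" "A \<union> B \<subseteq> S" "A \<inter> B = {}" "A \<noteq> {}" "\<forall>a\<in>A. \<forall>b\<in>B. E a b"
  shows "max_degree E A + card B \<le> max_degree E S"
proof -
  have "finite A" "finite B"
    using assms(1,2) finite_subset by auto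
  obtain v where v: "v \<in> A" "degree E A v = max_degree E A"
    using ex_degree_eq_max_degree[OF \<open>finite A\<close> assms(4)] .
  have "max_degree E A + card B = card ({u\<in>A. E v u} \<union> B)"
    using v \<open>finite A\<close> \<open>finite B\<close> assms(3) unfolding degree_def
    by (subst card_Un_disjoint) auto
  also have "\<dots> \<le> degree E S v"
    unfolding degree_def using v(1) assms by (intro card_mono) auto
  also have "\<dots> \<le> max_degree E S"
    using v(1) assms(1,2) by (intro degree_le_max_degree) auto
  finally show ?thesis .
qed

lemma alpha_join_le:
  assumes "finite A" "finite B" "\<forall>a\<in>A. \<forall>b\<in>B. E a b"
  shows "alpha E (A \<union> B) \<le> max (alpha E A) (alpha E B)"
proof -
  obtain I where I: "I \<subseteq> A \<union> B" "is_indep E I" "card I = alpha E (A \<union> B)"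
    using ex_indep_card_alpha[of "A \<union> B" E] assms by blast
  have "I \<subseteq> A \<or> I \<subseteq> B"
    using I(1,2) assms(3) unfolding is_indep_def by blast
  then show ?thesis
    using I assms(1,2) card_indep_le_alpha[of A I E] card_indep_le_alpha[of B I E] by force
qed

lemma connected_in_refl: "x \<in> S \<Longrightarrow> connected_in R S x x"
  unfolding connected_in_def by (rule exI[of _ "[x]"]) simp

lemma connected_in_snoc:
  assumes "connected_in R S x z" "z' \<in> S" "R z z'"
  shows "connected_in R S x z'"
proof -
  obtain p where p: "p \<noteq> []" "hd p = x" "last p = z" "set p \<subseteq> S"
    "\<forall>i < length p - 1. R (p ! i) (p ! Suc i)"
    using assms(1) unfolding connected_in_def by blast
  have "\<forall>i < length (p @ [z']) - 1. R ((p @ [z']) ! i) ((p @ [z']) ! Suc i)"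
  proof (intro allI impI)
    fix i assume "i < length (p @ [z']) - 1"
    then consider "i < length p - 1" | "i = length p - 1"
      by fastforce
    then show "R ((p @ [z']) ! i) ((p @ [z']) ! Suc i)"
    proof cases
      case 1
      then have "Suc i < length p"
        by simp
      then show ?thesis using 1 p(5) by (simp add: nth_append)
    next
      case 2
      then show ?thesis using p(1,3) assms(3) by (simp add: nth_append last_conv_nth)
    qed
  qed
  then show ?thesis
    unfolding connected_in_def using p assms(2) by (intro exI[of _ "p @ [z']"]) auto
qed

lemma compl_cutset_join:
  assumes "compl_cutset V E K"
  obtains A B where "A \<noteq> {}" "B \<noteq> {}" "A \<inter> B = {}" "A \<union> B = V - K"
    "\<forall>a\<in>A. \<forall>b\<in>B. E a b"
proof -
  obtain x y where xy: "x \<in> V - K" "y \<in> V - K" "\<not> connected_in (compl_adj E) (V - K) x y"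
    using assms unfolding compl_cutset_def disconnected_in_def by blast
  define A where "A = {z \<in> V - K. connected_in (compl_adj E) (V - K) x z}"
  have "x \<in> A" "y \<notin> A"
    unfolding A_def using xy connected_in_refl[OF xy(1)] by auto
  moreover have "E a b" if "a \<in> A" "b \<in> (V - K) - A" for a b
  proof (rule ccontr)
    assume "\<not> E a b"
    moreover have "a \<noteq> b"
      using that by blast
    ultimately have "compl_adj E a b"
      unfolding compl_adj_def by blast
    then have "b \<in> A"
      using that connected_in_snoc[of "compl_adj E" "V - K" x a b] unfolding A_def by blast
    then show False
      using that(2) by blast
  qed
  ultimately show ?thesis
    using that[of A "(V - K) - A"] xy(2) unfolding A_def by blast
qed

definition is_compl_matching :: "('a \<Rightarrow> 'a \<Rightarrow> bool) \<Rightarrow> 'a set \<Rightarrow> 'a set set \<Rightarrow> bool" where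
  "is_compl_matching E S M \<longleftrightarrow>
     (\<forall>e\<in>M. \<exists>x\<in>S. \<exists>y\<in>S. compl_adj E x y \<and> e = {x, y}) \<and> pairwise disjnt M"

definition is_max_compl_matching :: "('a \<Rightarrow> 'a \<Rightarrow> bool) \<Rightarrow> 'a set \<Rightarrow> 'a set set \<Rightarrow> bool" where
  "is_max_compl_matching E S M \<longleftrightarrow>
     is_compl_matching E S M \<and> (\<forall>M'. is_compl_matching E S M' \<longrightarrow> card M' \<le> card M)"

lemma is_compl_matching_empty [simp]: "is_compl_matching E S {}"
  by (simp add: is_compl_matching_def)

lemma compl_matching_subset_Pow: "is_compl_matching E S M \<Longrightarrow> M \<subseteq> Pow S"
  unfolding is_compl_matching_def by fastforce

lemma finite_compl_matching:
  assumes "finite S" "is_compl_matching E S M"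
  shows "finite M"
  using finite_subset[OF compl_matching_subset_Pow[OF assms(2)]] assms(1) by simp

lemma ex_max_compl_matching:
  assumes "finite S"
  obtains M where "is_max_compl_matching E S M"
proof -
  have "card M < Suc (card (Pow S))" if "is_compl_matching E S M" for M
    using card_mono[OF _ compl_matching_subset_Pow[OF that]] assms by simp
  moreover have "is_compl_matching E S {}"
    by simp
  ultimately obtain M where "is_compl_matching E S M"
    "\<forall>M'. is_compl_matching E S M' \<longrightarrow> card M' \<le> card M"
    using ex_has_greatest_nat[of "is_compl_matching E S" "{}" card "Suc (card (Pow S))"] by blast
  then show ?thesis
    using that unfolding is_max_compl_matching_def by blast
qed

lemma is_compl_matching_subset: "is_compl_matching E S M \<Longrightarrow> M' \<subseteq> M \<Longrightarrow> is_compl_matching E S M'"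
  unfolding is_compl_matching_def using pairwise_subset by blast

lemma is_compl_matching_Un:
  assumes "is_compl_matching E S M" "is_compl_matching E S M'"
    and disj: "\<forall>e\<in>M. \<forall>e'\<in>M'. disjnt e e'"
  shows "is_compl_matching E S (M \<union> M')"
proof -
  have pw: "pairwise disjnt M" "pairwise disjnt M'"
    using assms(1,2) unfolding is_compl_matching_def by auto
  have "pairwise disjnt (M \<union> M')"
    unfolding pairwise_def
  proof (intro ballI impI)
    fix e e' assume e: "e \<in> M \<union> M'" and e': "e' \<in> M \<union> M'" and "e \<noteq> e'"
    consider "e \<in> M" "e' \<in> M" | "e \<in> M" "e' \<in> M'" | "e \<in> M'" "e' \<in> M" | "e \<in> M'" "e' \<in> M'"
      using e e' by blast
    then show "disjnt e e'"
    proof cases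
      case 1
      then show ?thesis using pairwiseD[OF pw(1)] \<open>e \<noteq> e'\<close> by blast
    next
      case 2
      then show ?thesis using disj by blast
    next
      case 3
      then show ?thesis using disj disjnt_sym by blast
    next
      case 4
      then show ?thesis using pairwiseD[OF pw(2)] \<open>e \<noteq> e'\<close> by blast
    qed
  qed
  then show ?thesis
    using assms(1,2) unfolding is_compl_matching_def by blast
qed

lemma max_compl_matching_exchange:
  assumes "finite S" "is_max_compl_matching E S M" "X \<subseteq> M" "is_compl_matching E S Y"
    and alternating: "\<Union>Y \<subseteq> (S - \<Union>M) \<union> \<Union>X"
  shows "card Y \<le> card X"
proof -
  have M: "is_compl_matching E S M"
    and max: "\<And>M'. is_compl_matching E S M' \<Longrightarrow> card M' \<le> card M"
    using assms(2) unfolding is_max_compl_matching_def by auto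
  have fin: "finite M" "finite Y"
    using finite_compl_matching assms(1,4) M by auto
  have disj: "\<forall>e\<in>M - X. \<forall>e'\<in>Y. disjnt e e'"
  proof (intro ballI)
    fix e e' assume "e \<in> M - X" "e' \<in> Y"
    have "disjnt e x" if "x \<in> X" for x
      using pairwiseD[of disjnt M] M that \<open>e \<in> M - X\<close> assms(3)
      unfolding is_compl_matching_def by blast
    then show "disjnt e e'"
      using \<open>e \<in> M - X\<close> \<open>e' \<in> Y\<close> alternating unfolding disjnt_def by blast
  qed
  have "e \<noteq> {}" if "e \<in> Y" for e
    using assms(4) that unfolding is_compl_matching_def by blast
  then have "(M - X) \<inter> Y = {}"
    using disj unfolding disjnt_def by blast
  have "is_compl_matching E S ((M - X) \<union> Y)"
    using is_compl_matching_Un[OF is_compl_matching_subset[OF M] assms(4) disj] by blast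
  then have "card ((M - X) \<union> Y) \<le> card M"
    by (rule max)
  moreover have "card ((M - X) \<union> Y) = card M - card X + card Y"
    using fin assms(3) \<open>(M - X) \<inter> Y = {}\<close>
    by (simp add: card_Un_disjoint card_Diff_subset finite_subset)
  moreover have "card X \<le> card M"
    using fin(1) assms(3) by (rule card_mono)
  ultimately show ?thesis
    by linarith
qed

locale graph_adj =
  fixes E :: "'a \<Rightarrow> 'a \<Rightarrow> bool"
  assumes sym: "E x y \<Longrightarrow> E y x"
    and irrefl: "\<not> E x x"
begin

lemma compl_adj_sym: "compl_adj E x y \<Longrightarrow> compl_adj E y x"
  unfolding compl_adj_def using sym by blast

lemma ex_proper_colouring_chi:
  assumes "finite S"
  obtains f where "proper_colouring E S (chi E S) f"
proof -
  obtain g where g: "bij_betw g S {0..<card S}"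
    using ex_bij_betw_finite_nat[OF assms] by blast
  have colouring: "proper_colouring E S (card S) g"
    unfolding proper_colouring_def
  proof (intro conjI ballI impI)
    show "g x < card S" if "x \<in> S" for x
      using bij_betw_apply[OF g that] by simp
    show "g x \<noteq> g y" if "x \<in> S" "y \<in> S" "E x y" for x y
      using inj_onD[OF bij_betw_imp_inj_on[OF g] _ that(1,2)] that(3) irrefl by metis
  qed
  have "\<exists>f. proper_colouring E S (chi E S) f"
    unfolding chi_def by (rule LeastI_ex) (use colouring in blast)
  then show ?thesis
    using that by blast
qed

lemma chi_Un_le:
  assumes "finite S" "finite T"
  shows "chi E (S \<union> T) \<le> chi E S + chi E T"
proof -
  obtain f where f: "proper_colouring E S (chi E S) f"
    using ex_proper_colouring_chi[OF assms(1)] .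
  obtain g where g: "proper_colouring E T (chi E T) g"
    using ex_proper_colouring_chi[OF assms(2)] .
  define h where "h x = (if x \<in> S then f x else chi E S + g x)" for x
  have "proper_colouring E (S \<union> T) (chi E S + chi E T) h"
    unfolding proper_colouring_def
  proof (intro conjI ballI impI)
    show "h x < chi E S + chi E T" if "x \<in> S \<union> T" for x
      using that f g unfolding proper_colouring_def h_def by auto
    show "h x \<noteq> h y" if "x \<in> S \<union> T" "y \<in> S \<union> T" "E x y" for x y
    proof (cases "x \<in> S"; cases "y \<in> S")
      assume "x \<in> S" "y \<in> S"
      then show ?thesis using f that(3) unfolding proper_colouring_def h_def by simp
    next
      assume "x \<in> S" "y \<notin> S"
      then show ?thesis using f unfolding proper_colouring_def h_def by fastforce
    next
      assume "x \<notin> S" "y \<in> S"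
      then show ?thesis using f unfolding proper_colouring_def h_def by fastforce
    next
      assume "x \<notin> S" "y \<notin> S"
      then show ?thesis using g that unfolding proper_colouring_def h_def by simp
    qed
  qed
  then show ?thesis by (rule chi_le_colouring)
qed

lemma omega_join_le:
  assumes "finite S" "A \<union> B \<subseteq> S" "A \<inter> B = {}" "\<forall>a\<in>A. \<forall>b\<in>B. E a b"
  shows "omega E A + omega E B \<le> omega E S"
proof -
  obtain CA where CA: "CA \<subseteq> A" "is_clique E CA" "card CA = omega E A"
    using ex_clique_card_omega[of A E] assms(1,2) finite_subset by blast
  obtain CB where CB: "CB \<subseteq> B" "is_clique E CB" "card CB = omega E B"
    using ex_clique_card_omega[of B E] assms(1,2) finite_subset by blast
  have "is_clique E (CA \<union> CB)"
    using CA CB assms(4) sym unfolding is_clique_def by blast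
  then have "card (CA \<union> CB) \<le> omega E S"
    using CA(1) CB(1) assms(1,2) by (intro card_clique_le_omega) auto
  moreover have "card (CA \<union> CB) = card CA + card CB"
    using CA(1) CB(1) assms(1-3) finite_subset
    by (intro card_Un_disjoint) (auto dest: finite_subset)
  ultimately show ?thesis using CA(3) CB(3) by simp
qed

lemma alpha_le_2_no_compl_triangle:
  assumes "finite S" "alpha E S \<le> 2" "x \<in> S" "y \<in> S" "z \<in> S"
    and "compl_adj E x y" "compl_adj E y z" "compl_adj E x z"
  shows False
proof -
  have "is_indep E {x, y, z}"
    using assms(6-8) sym irrefl unfolding is_indep_def compl_adj_def by blast
  then have "card {x, y, z} \<le> alpha E S"
    using assms(1,3-5) by (intro card_indep_le_alpha) auto
  moreover have "card {x, y, z} = 3"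
    using assms(6-8) unfolding compl_adj_def by simp
  ultimately show False
    using assms(2) by simp
qed

lemma alpha_le_2_compl_nbhd_clique:
  assumes "finite S" "alpha E S \<le> 2" "v \<in> S"
  shows "is_clique E {w \<in> S. compl_adj E v w}"
  unfolding is_clique_def
proof (intro ballI impI)
  fix w w' assume w: "w \<in> {w \<in> S. compl_adj E v w}" "w' \<in> {w \<in> S. compl_adj E v w}" "w \<noteq> w'"
  show "E w w'"
  proof (rule ccontr)
    assume "\<not> E w w'"
    then have "compl_adj E w w'"
      using w(3) unfolding compl_adj_def by simp
    then show False
      using alpha_le_2_no_compl_triangle[OF assms(1,2,3), of w w'] w by simp
  qed
qed

lemma is_compl_matching_insert:
  "is_compl_matching E S (insert {a, b} M) \<longleftrightarrow>
     a \<in> S \<and> b \<in> S \<and> compl_adj E a b \<and> is_compl_matching E S M \<and>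
     (\<forall>e\<in>M. e \<noteq> {a, b} \<longrightarrow> disjnt {a, b} e)"
proof -
  have "(\<exists>x\<in>S. \<exists>y\<in>S. compl_adj E x y \<and> {a, b} = {x, y}) \<longleftrightarrow> a \<in> S \<and> b \<in> S \<and> compl_adj E a b"
    using compl_adj_sym by (auto simp: doubleton_eq_iff)
  then show ?thesis
    unfolding is_compl_matching_def pairwise_insert using disjnt_sym by blast
qed

end

locale max_compl_matching = graph_adj +
  fixes S :: "'a set" and M :: "'a set set"
  assumes finite_S: "finite S"
    and max_matching: "is_max_compl_matching E S M"
begin

definition unmatched :: "'a set" where
  "unmatched = S - \<Union>M"

(* Only meaningful for matched w; for unmatched w, THE yields an unspecified value. *)
definition mate :: "'a \<Rightarrow> 'a" where
  "mate w = (THE z. {w, z} \<in> M)"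

lemma matching: "is_compl_matching E S M"
  using max_matching unfolding is_max_compl_matching_def by blast

lemma finite_M: "finite M"
  using finite_compl_matching[OF finite_S matching] .

lemma edgeE:
  assumes "e \<in> M"
  obtains x y where "x \<in> S" "y \<in> S" "compl_adj E x y" "e = {x, y}"
  using matching assms unfolding is_compl_matching_def by blast

lemma matched_subset: "\<Union>M \<subseteq> S"
  using compl_matching_subset_Pow[OF matching] by blast

lemma edge_eq_if_meet: "e \<in> M \<Longrightarrow> e' \<in> M \<Longrightarrow> w \<in> e \<Longrightarrow> w \<in> e' \<Longrightarrow> e = e'"
  using matching unfolding is_compl_matching_def pairwise_def disjnt_def by blast

lemma mate_eq:
  assumes "{w, z} \<in> M"
  shows "mate w = z"
  unfolding mate_def
proof (rule the_equality)
  show "{w, z} \<in> M" by (rule assms)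
  show "z' = z" if "{w, z'} \<in> M" for z'
    using edge_eq_if_meet[OF that assms, of w] by (auto simp: doubleton_eq_iff)
qed

lemma mate_edge:
  assumes "w \<in> \<Union>M"
  shows "{w, mate w} \<in> M"
proof -
  obtain e where "e \<in> M" "w \<in> e"
    using assms by blast
  moreover obtain x y where "e = {x, y}"
    using edgeE[OF \<open>e \<in> M\<close>] by metis
  ultimately obtain z where "{w, z} \<in> M"
    by (auto simp: insert_commute)
  then show ?thesis
    using mate_eq by simp
qed

lemma mate_mate: "w \<in> \<Union>M \<Longrightarrow> mate (mate w) = w"
  using mate_edge by (intro mate_eq) (simp add: insert_commute)

lemma mate_matched: "w \<in> \<Union>M \<Longrightarrow> mate w \<in> \<Union>M"
  using mate_edge by blast

lemma compl_adj_mate: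
  assumes "w \<in> \<Union>M"
  shows "compl_adj E w (mate w)"
proof -
  obtain x y where "compl_adj E x y" "{w, mate w} = {x, y}"
    using edgeE[OF mate_edge[OF assms]] by metis
  then show ?thesis
    using compl_adj_sym by (auto simp: doubleton_eq_iff)
qed

lemma inj_on_mate: "inj_on mate (\<Union>M)"
  by (metis inj_onI mate_mate)

lemma card_S_eq: "card S = 2 * card M + card unmatched"
proof -
  have "finite e" if "e \<in> M" for e
    using finite_subset[OF _ finite_S] that matched_subset by blast
  then have "card (\<Union>M) = sum card M"
    using matching unfolding is_compl_matching_def by (intro card_Union_disjoint) auto
  also have "\<dots> = sum (\<lambda>_. 2) M"
  proof (rule sum.cong)
    show "card e = 2" if "e \<in> M" for e
      using edgeE[OF that] unfolding compl_adj_def by (metis card_2_iff)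
  qed simp
  finally have "card (\<Union>M) = 2 * card M"
    by simp
  moreover have "card S = card (\<Union>M) + card unmatched"
    unfolding unmatched_def using finite_S matched_subset
    by (metis card_Diff_subset card_mono finite_subset le_add_diff_inverse)
  ultimately show ?thesis by simp
qed

lemma chi_le_card_matching: "chi E S \<le> card M + card unmatched"
proof -
  define P where "P = M \<union> (\<lambda>u. {u}) ` unmatched"
  have "finite unmatched"
    unfolding unmatched_def using finite_S by simp
  then have "finite P"
    unfolding P_def using finite_M by simp
  moreover have "is_indep E B" if B: "B \<in> P" for B
  proof (cases "B \<in> M")
    case True
    then obtain x y where "compl_adj E x y" "B = {x, y}"
      using edgeE by metis
    then show ?thesis
      using sym irrefl unfolding is_indep_def compl_adj_def by auto
  next
    case False
    then obtain u where "B = {u}"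
      using B unfolding P_def by blast
    then show ?thesis
      using irrefl unfolding is_indep_def by simp
  qed
  moreover have "S \<subseteq> \<Union>P"
    unfolding P_def unmatched_def by blast
  ultimately have "chi E S \<le> card P"
    by (intro chi_le_card_indep_cover) auto
  also have "\<dots> \<le> card M + card ((\<lambda>u. {u}) ` unmatched)"
    unfolding P_def by (rule card_Un_le)
  also have "\<dots> \<le> card M + card unmatched"
    using card_image_le[OF \<open>finite unmatched\<close>] by simp
  finally show ?thesis .
qed

lemma card_le_if_alternating:
  "X \<subseteq> M \<Longrightarrow> is_compl_matching E S Y \<Longrightarrow> \<Union>Y \<subseteq> unmatched \<union> \<Union>X \<Longrightarrow> card Y \<le> card X"
  using max_compl_matching_exchange[OF finite_S max_matching] unfolding unmatched_def by blast

lemma unmatched_clique: "is_clique E unmatched"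
  unfolding is_clique_def
proof (intro ballI impI)
  fix u u' assume u: "u \<in> unmatched" "u' \<in> unmatched" "u \<noteq> u'"
  show "E u u'"
  proof (rule ccontr)
    assume "\<not> E u u'"
    then have "compl_adj E u u'"
      using u(3) unfolding compl_adj_def by simp
    then have "is_compl_matching E S {{u, u'}}"
      using u unfolding unmatched_def by (simp add: is_compl_matching_insert)
    then have "card {{u, u'}} \<le> card ({} :: 'a set set)"
      using u by (intro card_le_if_alternating) auto
    then show False
      by simp
  qed
qed

lemma no_augmenting_path_3:
  assumes "u \<in> unmatched" "u' \<in> unmatched" "u \<noteq> u'" "t \<in> \<Union>M"
    and "compl_adj E u t" "compl_adj E (mate t) u'"
  shows False
proof -
  have matched: "t \<in> \<Union>M" "mate t \<in> \<Union>M" "t \<noteq> mate t"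
    using mate_matched compl_adj_mate assms(4) unfolding compl_adj_def by auto
  have unmatched: "u \<notin> \<Union>M" "u' \<notin> \<Union>M"
    using assms(1,2) unfolding unmatched_def by auto
  have distinct: "u \<noteq> t" "u \<noteq> mate t" "u' \<noteq> t" "u' \<noteq> mate t"
    using matched unmatched by auto
  have "u \<in> S" "u' \<in> S" "t \<in> S" "mate t \<in> S"
    using assms(1,2) matched matched_subset unfolding unmatched_def by auto
  then have Y: "is_compl_matching E S {{u, t}, {mate t, u'}}"
    using assms(3,5,6) distinct matched(3) by (simp add: is_compl_matching_insert disjnt_def)
  have "card {{u, t}, {mate t, u'}} \<le> card {{t, mate t}}"
    using Y mate_edge[OF assms(4)] assms(1,2) by (intro card_le_if_alternating) auto
  moreover have "card {{u, t}, {mate t, u'}} = 2"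
    using distinct assms(3) by (simp add: doubleton_eq_iff)
  ultimately show False
    by simp
qed

lemma no_augmenting_path_5:
  assumes "u \<in> unmatched" "u' \<in> unmatched" "u \<noteq> u'" "t \<in> \<Union>M" "t' \<in> \<Union>M"
    and "t' \<noteq> t" "t' \<noteq> mate t"
    and "compl_adj E u t" "compl_adj E (mate t) (mate t')" "compl_adj E t' u'"
  shows False
proof -
  have matched: "t \<in> \<Union>M" "mate t \<in> \<Union>M" "t' \<in> \<Union>M" "mate t' \<in> \<Union>M"
    using mate_matched assms(4,5) by auto
  have unmatched: "u \<notin> \<Union>M" "u' \<notin> \<Union>M"
    using assms(1,2) unfolding unmatched_def by auto
  have "t \<noteq> mate t" "t' \<noteq> mate t'"
    using compl_adj_mate assms(4,5) unfolding compl_adj_def by auto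
  moreover have "mate t' \<noteq> t" "mate t' \<noteq> mate t"
    using assms(4-7) mate_mate by metis+
  moreover have "u \<noteq> t" "u \<noteq> mate t" "u \<noteq> t'" "u \<noteq> mate t'"
    "u' \<noteq> t" "u' \<noteq> mate t" "u' \<noteq> t'" "u' \<noteq> mate t'"
    using matched unmatched by auto
  ultimately have distinct: "distinct [u, u', t, mate t, t', mate t']"
    using assms(3,6,7) by auto
  have "u \<in> S" "u' \<in> S" "t \<in> S" "mate t \<in> S" "t' \<in> S" "mate t' \<in> S"
    using assms(1,2) matched matched_subset unfolding unmatched_def by auto
  then have Y: "is_compl_matching E S {{u, t}, {mate t, mate t'}, {t', u'}}"
    using assms(8-10) distinct by (auto simp: is_compl_matching_insert disjnt_def)
  have "card {{u, t}, {mate t, mate t'}, {t', u'}} \<le> card {{t, mate t}, {t', mate t'}}"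
    using Y mate_edge[OF assms(4)] mate_edge[OF assms(5)] assms(1,2)
    by (intro card_le_if_alternating) auto
  moreover have "card {{u, t}, {mate t, mate t'}, {t', u'}} = 3"
    using distinct by (auto simp: doubleton_eq_iff)
  moreover have "card {{t, mate t}, {t', mate t'}} = 2"
    using distinct by (simp add: doubleton_eq_iff)
  ultimately show False
    by simp
qed

end

locale unmatched_vertex = max_compl_matching +
  fixes u :: 'a
  assumes alpha_le_2: "alpha E S \<le> 2"
    and u_unmatched: "u \<in> unmatched"
begin

definition nonnbrs :: "'a set" where
  "nonnbrs = {w \<in> S. compl_adj E u w}"

definition joined :: "'a set" where
  "joined = {t \<in> nonnbrs. \<forall>u'\<in>unmatched - {u}. E t u'}"

lemma u_in_S: "u \<in> S"
  using u_unmatched unfolding unmatched_def by blast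

lemma finite_nonnbrs: "finite nonnbrs"
  unfolding nonnbrs_def using finite_S by simp

lemma nonnbrs_matched: "nonnbrs \<subseteq> \<Union>M"
proof
  fix w assume w: "w \<in> nonnbrs"
  then have "compl_adj E u w"
    unfolding nonnbrs_def by blast
  show "w \<in> \<Union>M"
  proof (rule ccontr)
    assume "w \<notin> \<Union>M"
    then have "w \<in> unmatched"
      using w unfolding nonnbrs_def unmatched_def by blast
    then have "E u w"
      using unmatched_clique u_unmatched \<open>compl_adj E u w\<close>
      unfolding is_clique_def compl_adj_def by blast
    then show False
      using \<open>compl_adj E u w\<close> unfolding compl_adj_def by blast
  qed
qed

lemma nonnbrs_clique: "is_clique E nonnbrs"
  unfolding nonnbrs_def using alpha_le_2_compl_nbhd_clique[OF finite_S alpha_le_2 u_in_S] .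

lemma mate_nonnbr_adj_unmatched:
  assumes "t \<in> nonnbrs" "u' \<in> unmatched"
  shows "E (mate t) u'"
proof (rule ccontr)
  assume "\<not> E (mate t) u'"
  have t: "t \<in> \<Union>M" "mate t \<in> \<Union>M"
    using nonnbrs_matched assms(1) mate_matched by auto
  have "mate t \<noteq> u'"
    using t(2) assms(2) unfolding unmatched_def by blast
  then have mate_u': "compl_adj E (mate t) u'"
    using \<open>\<not> E (mate t) u'\<close> unfolding compl_adj_def by simp
  have u_t: "compl_adj E u t"
    using assms(1) unfolding nonnbrs_def by simp
  show False
  proof (cases "u' = u")
    case True
    have "t \<in> S" "mate t \<in> S"
      using t matched_subset by auto
    then show False
      using alpha_le_2_no_compl_triangle[OF finite_S alpha_le_2 u_in_S, of t "mate t"]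
        u_t compl_adj_mate[OF t(1)] mate_u' True compl_adj_sym by blast
  next
    case False
    then show False
      using no_augmenting_path_3[OF u_unmatched assms(2) _ t(1) u_t mate_u'] by simp
  qed
qed

lemma mates_adj:
  assumes "t \<in> nonnbrs - joined" "t' \<in> nonnbrs" "t \<noteq> t'"
  shows "E (mate t) (mate t')"
proof (rule ccontr)
  assume "\<not> E (mate t) (mate t')"
  obtain u1 where u1: "u1 \<in> unmatched" "u1 \<noteq> u" "\<not> E t u1"
    using assms(1) unfolding joined_def by blast
  have t: "t \<in> \<Union>M" "t' \<in> \<Union>M"
    using nonnbrs_matched assms(1,2) by auto
  have "u1 \<noteq> t"
    using u1(1) t(1) unfolding unmatched_def by blast
  then have u1_t: "compl_adj E u1 t"
    using u1(3) sym unfolding compl_adj_def by blast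
  have "mate t \<noteq> mate t'"
    using inj_onD[OF inj_on_mate _ t] assms(3) by blast
  then have mates: "compl_adj E (mate t) (mate t')"
    using \<open>\<not> E (mate t) (mate t')\<close> unfolding compl_adj_def by simp
  have t'_u: "compl_adj E t' u"
    using assms(2) compl_adj_sym unfolding nonnbrs_def by blast
  have "E t t'"
    using nonnbrs_clique assms unfolding is_clique_def by blast
  then have "t' \<noteq> mate t"
    using compl_adj_mate[OF t(1)] unfolding compl_adj_def by blast
  then show False
    using no_augmenting_path_5[OF u1(1) u_unmatched u1(2) t _ _ u1_t mates t'_u] assms(3) by blast
qed

lemma clique_unmatched_joined: "is_clique E ((unmatched - {u}) \<union> joined)"
  unfolding is_clique_def
proof (intro ballI impI)
  fix a b assume a: "a \<in> (unmatched - {u}) \<union> joined" and b: "b \<in> (unmatched - {u}) \<union> joined"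
    and "a \<noteq> b"
  consider "a \<in> unmatched" "b \<in> unmatched" | "a \<in> joined" "b \<in> joined"
    | "a \<in> joined" "b \<in> unmatched - {u}" | "a \<in> unmatched - {u}" "b \<in> joined"
    using a b by blast
  then show "E a b"
  proof cases
    case 1
    then show ?thesis using unmatched_clique \<open>a \<noteq> b\<close> unfolding is_clique_def by blast
  next
    case 2
    then show ?thesis using nonnbrs_clique \<open>a \<noteq> b\<close> unfolding is_clique_def joined_def by blast
  next
    case 3
    then show ?thesis unfolding joined_def by blast
  next
    case 4
    then show ?thesis using sym unfolding joined_def by blast
  qed
qed

lemma clique_unmatched_mates:
  assumes "T \<subseteq> nonnbrs" and one_unjoined: "\<forall>t\<in>T. \<forall>t'\<in>T. t \<noteq> t' \<longrightarrow> t \<notin> joined \<or> t' \<notin> joined"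
  shows "is_clique E (unmatched \<union> mate ` T)"
  unfolding is_clique_def
proof (intro ballI impI)
  fix a b assume a: "a \<in> unmatched \<union> mate ` T" and b: "b \<in> unmatched \<union> mate ` T" and "a \<noteq> b"
  consider "a \<in> unmatched" "b \<in> unmatched" | t where "t \<in> T" "a = mate t" "b \<in> unmatched"
    | t where "t \<in> T" "a \<in> unmatched" "b = mate t"
    | t t' where "t \<in> T" "t' \<in> T" "a = mate t" "b = mate t'"
    using a b by blast
  then show "E a b"
  proof cases
    case 1
    then show ?thesis using unmatched_clique \<open>a \<noteq> b\<close> unfolding is_clique_def by blast
  next
    case 2
    then show ?thesis using mate_nonnbr_adj_unmatched assms(1) by blast
  next
    case 3
    then show ?thesis using mate_nonnbr_adj_unmatched assms(1) sym by blast
  next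
    case (4 t t')
    then have "t \<noteq> t'"
      using \<open>a \<noteq> b\<close> by blast
    then have "t \<in> nonnbrs - joined \<or> t' \<in> nonnbrs - joined"
      using one_unjoined 4(1,2) assms(1) by blast
    then show ?thesis
      using mates_adj[of t t'] mates_adj[of t' t] 4 assms(1) \<open>t \<noteq> t'\<close> sym by blast
  qed
qed

lemma card_unmatched_Un_mates:
  assumes "T \<subseteq> nonnbrs"
  shows "card (unmatched \<union> mate ` T) = card unmatched + card T"
proof -
  have "T \<subseteq> \<Union>M"
    using assms nonnbrs_matched by blast
  then have "mate ` T \<subseteq> \<Union>M" "inj_on mate T"
    using mate_matched inj_on_subset[OF inj_on_mate] by blast+
  moreover have "finite unmatched" "finite T"
    unfolding unmatched_def using finite_S finite_nonnbrs assms finite_subset by auto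
  ultimately show ?thesis
    unfolding unmatched_def by (subst card_Un_disjoint) (auto simp: card_image)
qed

lemma card_unmatched_joined: "card ((unmatched - {u}) \<union> joined) + 1 = card unmatched + card joined"
proof -
  have "joined \<subseteq> nonnbrs"
    unfolding joined_def by blast
  then have "finite unmatched" "finite joined"
    unfolding unmatched_def using finite_S finite_nonnbrs finite_subset by auto
  moreover have "(unmatched - {u}) \<inter> joined = {}"
    using \<open>joined \<subseteq> nonnbrs\<close> nonnbrs_matched unfolding unmatched_def by blast
  moreover have "0 < card unmatched"
    using u_unmatched calculation(1) card_gt_0_iff by blast
  ultimately show ?thesis
    using u_unmatched by (simp add: card_Un_disjoint card_Diff_singleton)
qed

lemma card_unmatched_nonnbrs_le: "2 * card unmatched + card nonnbrs \<le> 2 * omega E S"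
proof -
  have mates_in_S: "unmatched \<union> mate ` T \<subseteq> S" if "T \<subseteq> nonnbrs" for T
    using that nonnbrs_matched mate_matched matched_subset unfolding unmatched_def by blast
  show ?thesis
  proof (cases "joined = {}")
    case True
    then have "is_clique E (unmatched \<union> mate ` nonnbrs)"
      by (intro clique_unmatched_mates) auto
    then have "card unmatched + card nonnbrs \<le> omega E S"
      using card_clique_le_omega[OF finite_S mates_in_S] card_unmatched_Un_mates by simp
    then show ?thesis
      by simp
  next
    case False
    then obtain t0 where t0: "t0 \<in> joined"
      by blast
    have joined_nonnbrs: "joined \<subseteq> nonnbrs"
      unfolding joined_def by blast
    define T where "T = insert t0 (nonnbrs - joined)"
    have "T \<subseteq> nonnbrs"
      unfolding T_def using t0 joined_nonnbrs by blast
    moreover have "\<forall>t\<in>T. \<forall>t'\<in>T. t \<noteq> t' \<longrightarrow> t \<notin> joined \<or> t' \<notin> joined"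
      unfolding T_def by blast
    ultimately have "card unmatched + card T \<le> omega E S"
      using clique_unmatched_mates card_clique_le_omega[OF finite_S mates_in_S]
        card_unmatched_Un_mates by metis
    moreover have "card T + card joined = card nonnbrs + 1"
      unfolding T_def using t0 joined_nonnbrs finite_nonnbrs
      by (simp add: card_Diff_subset finite_subset card_mono)
    moreover note card_unmatched_joined
    moreover have "card ((unmatched - {u}) \<union> joined) \<le> omega E S"
      using clique_unmatched_joined joined_nonnbrs nonnbrs_def
      by (intro card_clique_le_omega[OF finite_S]) (auto simp: unmatched_def)
    ultimately show ?thesis
      by linarith
  qed
qed

end

context max_compl_matching
begin

lemma four_chi_le:
  assumes "alpha E S \<le> 2"
  shows "4 * chi E S \<le> 2 * omega E S + max_degree E S + card S + 1"
proof (cases "unmatched = {}")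
  case True
  have "card S \<le> 2 * omega E S + max_degree E S + 1"
  proof (cases "S = {}")
    case False
    then obtain v where v: "v \<in> S"
      by blast
    have "card {w \<in> S. compl_adj E v w} \<le> omega E S"
      using alpha_le_2_compl_nbhd_clique[OF finite_S assms v] finite_S
      by (intro card_clique_le_omega) auto
    then show ?thesis
      using card_le_degree_compl_degree[OF finite_S v, of E]
        degree_le_max_degree[OF finite_S v, of E]
      by linarith
  qed simp
  then show ?thesis
    using chi_le_card_matching card_S_eq True by simp
next
  case False
  then obtain u where "u \<in> unmatched"
    by blast
  then interpret unmatched_vertex E S M u
    using assms by unfold_locales
  have "card S \<le> 1 + max_degree E S + card nonnbrs"
    using card_le_degree_compl_degree[OF finite_S u_in_S, of E]
      degree_le_max_degree[OF finite_S u_in_S, of E]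
    unfolding nonnbrs_def by linarith
  then show ?thesis
    using card_unmatched_nonnbrs_le chi_le_card_matching card_S_eq by linarith
qed

end

context graph_adj
begin

lemma max_indep_dominating:
  assumes "finite S" "I \<subseteq> S" "is_indep E I" "card I = alpha E S" "v \<in> S - I"
  obtains w where "w \<in> I" "E v w"
proof -
  have "\<exists>w\<in>I. E v w"
  proof (rule ccontr)
    assume "\<not> (\<exists>w\<in>I. E v w)"
    then have "is_indep E (insert v I)"
      using assms(3) sym irrefl unfolding is_indep_def by blast
    then have "card (insert v I) \<le> alpha E S"
      using assms(1,2,5) by (intro card_indep_le_alpha) auto
    moreover have "card (insert v I) = card I + 1"
      using assms(1,2,5) finite_subset by fastforce
    ultimately show False
      using assms(4) by simp
  qed
  then show ?thesis
    using that by blast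
qed

lemma max_degree_Diff_max_indep:
  assumes "finite S" "I \<subseteq> S" "is_indep E I" "card I = alpha E S" "S - I \<noteq> {}"
  shows "max_degree E (S - I) + 1 \<le> max_degree E S"
proof -
  obtain v where v: "v \<in> S - I" "degree E (S - I) v = max_degree E (S - I)"
    using ex_degree_eq_max_degree[of "S - I" E] assms(1,5) by blast
  obtain w where "w \<in> I" "E v w"
    using max_indep_dominating[OF assms(1-4) v(1)] .
  then have "insert w {x \<in> S - I. E v x} \<subseteq> {x \<in> S. E v x}"
    using assms(2) by blast
  then have "card (insert w {x \<in> S - I. E v x}) \<le> degree E S v"
    unfolding degree_def using assms(1) by (intro card_mono) auto
  moreover have "card (insert w {x \<in> S - I. E v x}) = degree E (S - I) v + 1"
    unfolding degree_def using \<open>w \<in> I\<close> assms(1) by simp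
  moreover have "degree E S v \<le> max_degree E S"
    using v(1) assms(1) by (intro degree_le_max_degree) auto
  ultimately show ?thesis
    using v(2) by linarith
qed

lemma four_chi_le_if_alpha_le_2:
  assumes "finite S" "alpha E S \<le> 2"
  shows "4 * chi E S \<le> 2 * omega E S + max_degree E S + card S + 1"
proof -
  obtain M where "is_max_compl_matching E S M"
    using ex_max_compl_matching[OF assms(1)] .
  then interpret max_compl_matching E S M
    using assms(1) by unfold_locales
  show ?thesis
    using four_chi_le[OF assms(2)] .
qed

lemma chi_le_Diff_indep_Suc:
  assumes "finite S" "I \<subseteq> S" "is_indep E I"
  shows "chi E S \<le> chi E (S - I) + 1"
proof -
  have "chi E ((S - I) \<union> I) \<le> chi E (S - I) + chi E I"
    using assms(1,2) finite_subset by (intro chi_Un_le) auto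
  then show ?thesis
    using chi_indep_le_1[OF assms(3)] assms(2) by (simp add: Un_absorb2)
qed

theorem four_chi_plus_alpha_le:
  "finite S \<Longrightarrow> 4 * chi E S + max (alpha E S) 3 \<le> 2 * omega E S + max_degree E S + card S + 4"
proof (induction "card S" arbitrary: S rule: less_induct)
  case less
  show ?case
  proof (cases "alpha E S \<le> 2")
    case True
    then show ?thesis
      using four_chi_le_if_alpha_le_2[OF less.prems] by simp
  next
    case False
    obtain I where I: "I \<subseteq> S" "is_indep E I" "card I = alpha E S"
      using ex_indep_card_alpha[OF less.prems] .
    have "alpha E S \<le> card S"
      using I(1,3) card_mono[OF less.prems] by metis
    have card_Diff: "card (S - I) = card S - alpha E S"
      using card_Diff_subset[OF finite_subset[OF I(1) less.prems] I(1)] I(3) by simp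
    have chi: "chi E S \<le> chi E (S - I) + 1"
      using chi_le_Diff_indep_Suc[OF less.prems I(1,2)] .
    show ?thesis
    proof (cases "S - I = {}")
      case True
      have "chi E S \<le> 1"
        using chi unfolding True by simp
      moreover have "card S = alpha E S"
        using card_Diff \<open>alpha E S \<le> card S\<close> unfolding True by simp
      ultimately show ?thesis
        using False by simp
    next
      case nonempty: False
      have "card (S - I) < card S"
        using card_Diff False \<open>alpha E S \<le> card S\<close> by linarith
      then have "4 * chi E (S - I) + 3 \<le>
          2 * omega E (S - I) + max_degree E (S - I) + card (S - I) + 4"
        using less.hyps[of "S - I"] less.prems by fastforce
      moreover have "omega E (S - I) \<le> omega E S"
        using less.prems by (intro omega_mono) auto
      moreover have "max_degree E (S - I) + 1 \<le> max_degree E S"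
        using max_degree_Diff_max_indep[OF less.prems I nonempty] .
      ultimately show ?thesis
        using chi card_Diff \<open>alpha E S \<le> card S\<close> False by simp
    qed
  qed
qed

lemma four_chi_plus_alpha_le_compl_cutset:
  assumes "finite V" "compl_cutset V E K"
  shows "4 * chi E V + alpha E V \<le>
    2 * omega E V + 2 * max_degree E V + 5 + 4 * chi E K + alpha E K"
proof -
  obtain A B where AB: "A \<noteq> {}" "B \<noteq> {}" "A \<inter> B = {}" "A \<union> B = V - K"
    and join: "\<forall>a\<in>A. \<forall>b\<in>B. E a b"
    using compl_cutset_join[OF assms(2)] .
  have V: "V = K \<union> (A \<union> B)"
    using AB(4) assms(2) unfolding compl_cutset_def by blast
  then have fin: "finite K" "finite A" "finite B"
    using assms(1) by (metis finite_Un)+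
  have "chi E V \<le> chi E K + chi E A + chi E B"
    using chi_Un_le[of K "A \<union> B"] chi_Un_le[of A B] fin V by simp
  moreover have "alpha E V \<le> alpha E K + max (alpha E A) (alpha E B)"
    using alpha_Un_le[of K "A \<union> B" E] alpha_join_le[OF fin(2,3) join] fin V by simp
  moreover have "omega E A + omega E B \<le> omega E V"
    using omega_join_le[OF assms(1) _ AB(3) join] V by blast
  moreover have "max_degree E A + card B \<le> max_degree E V"
    using max_degree_join_le[OF assms(1) _ AB(3,1) join] V by blast
  moreover have "max_degree E B + card A \<le> max_degree E V"
    using max_degree_join_le[of V B A E] assms(1) AB(2,3) join sym V by blast
  moreover note four_chi_plus_alpha_le[OF fin(2)] four_chi_plus_alpha_le[OF fin(3)]
  ultimately show ?thesis
    by (simp add: max_def split: if_splits)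
qed

end

lemma nat_bound_imp_real_bound:
  assumes "4 * c + aV \<le> 2 * w + 2 * D + 5 + 4 * cK + aK"
  shows "real c \<le> (real w + real D + 1) / 2 + (4 * real cK + real aK + 3 - real aV) / 4"
proof -
  have "real (4 * c + aV) \<le> real (2 * w + 2 * D + 5 + 4 * cK + aK)"
    using assms by (simp only: of_nat_le_iff)
  then have "4 * real c + real aV \<le> 2 * real w + 2 * real D + 5 + 4 * real cK + real aK"
    by simp
  then show ?thesis
    by (simp add: field_simps)
qed

theorem corollary6:
  fixes V :: "'a set" and E :: "'a \<Rightarrow> 'a \<Rightarrow> bool" and K :: "'a set"
  assumes "simple_graph V E"
    and "compl_cutset V E K"
  shows "real (chi E V) \<le> (real (omega E V) + real (max_degree E V) + 1) / 2
           + (4 * real (chi E K) + real (alpha E K) + 3 - real (alpha E V)) / 4"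
proof -
  interpret graph_adj E
    using assms(1) unfolding simple_graph_def by unfold_locales auto
  have "finite V"
    using assms(1) unfolding simple_graph_def by blast
  then show ?thesis
    by (intro nat_bound_imp_real_bound four_chi_plus_alpha_le_compl_cutset assms(2))
qed

end
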